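(* Suppose $\Delta(x,\varepsilon)$ is not independent of $x$. Let $r\ge1$ be the smallest index such that $\Delta_r$ is nonconstant, and put $$A(\varepsilon)=\sum_{n<r}\Delta_n\varepsilon^n,$$ a polynomial in $\varepsilon$ with constant coefficients, so that $\Delta(x,\varepsilon)=A(\varepsilon)+\Delta_r(x)\varepsilon^r+o(\varepsilon^r)$. Then, as $\varepsilon\to0$, for each $x$, $${}_qR\big(x,Y(x,\varepsilon),\varepsilon,A(\varepsilon)\big)=\frac{q(q+1)}{2}\,\Delta_r(x)\,\varepsilon^r+o(\varepsilon^r),$$ $${}_qS\big(x,Y(x,\varepsilon),\varepsilon,A(\varepsilon)\big)=q\,\Delta_r(x)\,\varepsilon^r+o(\varepsilon^r).$$
   Context: Fix integers $p$ and $q\ge1$ and put $\mu=2\pi p/q$. Let $f:\mathbb R\to\mathbb R$ be a $2\pi$-periodic real-analytic function. For real parameters $\varepsilon,\delta$ set $g(x)=-\delta-\varepsilon f(x)$ and consider the map $T_{\varepsilon,\delta}(x,y)=(x+y+\mu+g(x),\;y+g(x))$ on $\mathbb R^2$. Define ${}_nR$ and ${}_nS$ by $T^n_{\varepsilon,\delta}(x_0,y_0)=(x_0+n\mu+{}_nR,\;y_0+{}_nS)$. There exist $\bar{\bar\varepsilon},\eta>0$ and real-analytic functions $\Delta(x,\varepsilon)$ and $Y(x,\varepsilon)$, defined for $x\in\mathbb R$ and $|\varepsilon|<\bar{\bar\varepsilon}$ and vanishing at $\varepsilon=0$, such that $(\delta,y)=(\Delta(x,\varepsilon),Y(x,\varepsilon))$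 is the unique solution with $|\delta|,|y|<\eta$ of ${}_qR(x,y,\varepsilon,\delta)={}_qS(x,y,\varepsilon,\delta)=0$. Write $\Delta(x,\varepsilon)=\sum_{n\ge1}\Delta_n(x)\varepsilon^n$. *)

theory Defs
  imports "HOL-Analysis.Analysis" "HOL-Library.Landau_Symbols"
begin

definition real_analytic_on :: "(real \<Rightarrow> real) \<Rightarrow> real set \<Rightarrow> bool" where
  "real_analytic_on f S \<longleftrightarrow>
     (\<forall>a\<in>S. \<exists>\<rho>>0. \<exists>c::nat \<Rightarrow> real. \<forall>x. \<bar>x - a\<bar> < \<rho> \<longrightarrow>
        ((\<lambda>i. c i * (x - a) ^ i) has_sum f x) UNIV)"

definition real_analytic2_on :: "(real \<Rightarrow> real \<Rightarrow> real) \<Rightarrow> (real \<times> real) set \<Rightarrow> bool" where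
  "real_analytic2_on F U \<longleftrightarrow>
     (\<forall>(a, b)\<in>U. \<exists>\<rho>>0. \<exists>c::nat \<Rightarrow> nat \<Rightarrow> real. \<forall>x e. \<bar>x - a\<bar> < \<rho> \<and> \<bar>e - b\<bar> < \<rho> \<longrightarrow>
        ((\<lambda>(i, j). c i j * (x - a) ^ i * (e - b) ^ j) has_sum F x e) UNIV)"

definition Tmap :: "real \<Rightarrow> (real \<Rightarrow> real) \<Rightarrow> real \<Rightarrow> real \<Rightarrow> real \<times> real \<Rightarrow> real \<times> real" where
  "Tmap \<mu> f \<epsilon> \<delta> = (\<lambda>(x, y). let g = - \<delta> - \<epsilon> * f x in (x + y + \<mu> + g, y + g))"

definition nR :: "nat \<Rightarrow> real \<Rightarrow> (real \<Rightarrow> real) \<Rightarrow> real \<Rightarrow> real \<Rightarrow> real \<Rightarrow> real \<Rightarrow> real" where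
  "nR n \<mu> f x y \<epsilon> \<delta> = fst ((Tmap \<mu> f \<epsilon> \<delta> ^^ n) (x, y)) - x - real n * \<mu>"

definition nS :: "nat \<Rightarrow> real \<Rightarrow> (real \<Rightarrow> real) \<Rightarrow> real \<Rightarrow> real \<Rightarrow> real \<Rightarrow> real \<Rightarrow> real" where
  "nS n \<mu> f x y \<epsilon> \<delta> = snd ((Tmap \<mu> f \<epsilon> \<delta> ^^ n) (x, y)) - y"

end

theory Submission
  imports Defs
begin

(* If T^q(x, y) = (x + q \<mu>, y) for the parameter \<delta>, then qR and qS at another parameter \<delta>'
   measure how far the two q-step orbits of (x, y) drift apart.  Lowering \<delta> by d adds d to every
   y-increment, so after k steps the y-gap is k d and the x-gap, which sums the y-gaps, is
   k (k + 1) / 2 \<cdot> d; the terms \<epsilon> f contribute only O(\<epsilon> d), as f is periodic and C^1, hence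
   Lipschitz.  With \<delta> = \<Delta>(x, \<epsilon>), \<delta>' = A(\<epsilon>) and d = \<Delta>_r(x) \<epsilon>^r + O(\<epsilon>^(r+1)) this is
   the claim. *)

lemma periodic_shift_int:
  fixes g :: "real \<Rightarrow> 'a"
  assumes per: "\<And>x. g (x + T) = g x"
  shows "g (x + of_int k * T) = g x"
proof (induction k rule: int_induct[where k = 0])
  case base
  show ?case by simp
next
  case (step1 i)
  have "g (x + of_int (i + 1) * T) = g ((x + of_int i * T) + T)"
    by (simp add: algebra_simps)
  with step1 per show ?case by simp
next
  case (step2 i)
  have "g (x + of_int (i - 1) * T) = g ((x + of_int (i - 1) * T) + T)"
    by (rule per[symmetric])
  also have "\<dots> = g (x + of_int i * T)"
    by (simp add: algebra_simps)
  finally show ?case using step2 by simp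
qed

lemma periodic_continuous_bounded:
  fixes g :: "real \<Rightarrow> real"
  assumes cont: "continuous_on UNIV g" and per: "\<And>x. g (x + T) = g x" and T: "T > 0"
  obtains M where "\<And>x. \<bar>g x\<bar> \<le> M"
proof -
  obtain M where M: "\<And>s. 0 \<le> s \<Longrightarrow> s \<le> T \<Longrightarrow> \<bar>g s\<bar> \<le> M"
    using isCont_bounded[of 0 T "\<lambda>s. \<bar>g s\<bar>"] cont T
    by (force intro!: continuous_intros simp: continuous_on_eq_continuous_at)
  have "\<bar>g x\<bar> \<le> M" for x
  proof -
    define k where "k = \<lfloor>x / T\<rfloor>"
    define s where "s = x - of_int k * T"
    have "of_int k \<le> x / T" "x / T < of_int k + 1"
      unfolding k_def by linarith+
    with T have "0 \<le> s" "s \<le> T"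
      unfolding s_def by (simp_all add: field_simps)
    moreover have "g x = g s"
      using periodic_shift_int[of g T s k, OF per] by (simp add: s_def)
    ultimately show ?thesis using M by simp
  qed
  then show thesis by (rule that)
qed

lemma periodic_deriv_periodic:
  fixes f f' :: "real \<Rightarrow> real"
  assumes deriv: "\<And>x. (f has_real_derivative f' x) (at x)" and per: "\<And>x. f (x + T) = f x"
  shows "f' (x + T) = f' x"
proof -
  have "((\<lambda>t. t + T) has_real_derivative 1) (at x)"
    by (auto intro!: derivative_eq_intros)
  from DERIV_chain2[OF deriv this]
  have "((\<lambda>t. f (t + T)) has_real_derivative f' (x + T)) (at x)"
    by simp
  then have "(f has_real_derivative f' (x + T)) (at x)"
    using per by simp
  with deriv show ?thesis by (metis DERIV_unique)
qed

lemma periodic_C1_lipschitz: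
  fixes f f' :: "real \<Rightarrow> real"
  assumes deriv: "\<And>x. (f has_real_derivative f' x) (at x)" and cont: "continuous_on UNIV f'"
    and per: "\<And>x. f (x + T) = f x" and T: "T > 0"
  obtains L where "L-lipschitz_on UNIV f"
proof -
  obtain M where M: "\<And>x. \<bar>f' x\<bar> \<le> M"
    using periodic_continuous_bounded[OF cont periodic_deriv_periodic[OF deriv per] T] by blast
  have "M-lipschitz_on UNIV f"
  proof (rule lipschitz_onI)
    show "0 \<le> M" using M[of 0] by linarith
    fix u v :: real
    show "dist (f u) (f v) \<le> M * dist u v"
      using field_differentiable_bound[of UNIV f f' M u v] deriv M by (simp add: dist_real_def)
  qed
  then show thesis by (rule that)
qed

lemma real_analytic_on_local_deriv:
  assumes "real_analytic_on f UNIV"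
  obtains \<rho> D where "\<rho> > 0" "\<And>z. \<bar>z - a\<bar> < \<rho> \<Longrightarrow> (f has_real_derivative D z) (at z)" "isCont D a"
proof -
  obtain \<rho> c where \<rho>: "\<rho> > 0"
    and hs: "\<And>x. \<bar>x - a\<bar> < \<rho> \<Longrightarrow> ((\<lambda>i. c i * (x - a) ^ i) has_sum f x) UNIV"
    using assms unfolding real_analytic_on_def by blast
  have sums: "(\<lambda>i. c i * w ^ i) sums f (w + a)" if "norm w < \<rho>" for w :: real
    using hs[of "w + a"] that by (auto intro: has_sum_imp_sums)
  define D where "D = (\<lambda>z. \<Sum>n. diffs c n * (z - a) ^ n)"
  have "(f has_real_derivative D z) (at z)" if z: "\<bar>z - a\<bar> < \<rho>" for z
  proof -
    have "((\<lambda>w. \<Sum>n. c n * w ^ n) has_real_derivative D z) (at (z - a))"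
      unfolding D_def
      by (rule termdiffs_strong'[where K = \<rho>]) (use sums z in \<open>auto intro: sums_summable\<close>)
    moreover have "((\<lambda>x. x - a) has_real_derivative 1) (at z)"
      by (auto intro!: derivative_eq_intros)
    ultimately have "((\<lambda>x. \<Sum>n. c n * (x - a) ^ n) has_real_derivative D z) (at z)"
      using DERIV_chain2 by fastforce
    then show ?thesis
      by (rule has_field_derivative_transform_within_open[where S = "{a - \<rho><..<a + \<rho>}"])
         (use z sums in \<open>auto simp: sums_iff abs_less_iff\<close>)
  qed
  moreover have "isCont D a"
  proof -
    have "summable (\<lambda>n. diffs c n * (\<rho> / 2) ^ n)"
      by (rule termdiff_converges[where K = \<rho>]) (use sums \<rho> in \<open>auto intro: sums_summable\<close>)
    then have "isCont (\<lambda>w. \<Sum>n. diffs c n * w ^ n) (a - a)"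
      by (rule isCont_powser) (use \<rho> in auto)
    then show ?thesis
      unfolding D_def by (intro continuous_intros isCont_o2[where f = "\<lambda>z. z - a"]) auto
  qed
  ultimately show thesis using \<rho> that by blast
qed

lemma real_analytic_on_UNIV_C1:
  assumes an: "real_analytic_on f UNIV"
  shows "\<And>x. (f has_real_derivative deriv f x) (at x)" and "continuous_on UNIV (deriv f)"
proof -
  show "(f has_real_derivative deriv f x) (at x)" for x
    using real_analytic_on_local_deriv[OF an, of x] DERIV_imp_deriv by (metis abs_zero diff_self)
  have "isCont (deriv f) a" for a
  proof -
    obtain \<rho> D where \<rho>: "\<rho> > 0" and D: "\<And>z. \<bar>z - a\<bar> < \<rho> \<Longrightarrow> (f has_real_derivative D z) (at z)"
      and "isCont D a"
      using real_analytic_on_local_deriv[OF an, of a] by blast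
    moreover have "eventually (\<lambda>z. \<bar>z - a\<bar> < \<rho>) (nhds a)"
      using \<rho> by (intro eventually_nhds_in_open[of "{a - \<rho><..<a + \<rho>}", THEN eventually_mono])
        (auto simp: abs_less_iff)
    then have "eventually (\<lambda>z. deriv f z = D z) (nhds a)"
      by eventually_elim (use D DERIV_imp_deriv in blast)
    ultimately show ?thesis using isCont_cong by blast
  qed
  then show "continuous_on UNIV (deriv f)"
    by (simp add: continuous_at_imp_continuous_on)
qed

lemma Tmap_apply: "Tmap \<mu> f e d P = (fst P + snd P + \<mu> - d - e * f (fst P), snd P - d - e * f (fst P))"
  by (cases P) (simp add: Tmap_def Let_def)

lemma Tmap_gap:
  "fst (Tmap \<mu> f e d1 P) - fst (Tmap \<mu> f e d2 Q)
     = (fst P - fst Q) + (snd (Tmap \<mu> f e d1 P) - snd (Tmap \<mu> f e d2 Q))"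
  "snd (Tmap \<mu> f e d1 P) - snd (Tmap \<mu> f e d2 Q) + real (Suc k) * (d1 - d2)
     = (snd P - snd Q + real k * (d1 - d2)) - e * (f (fst P) - f (fst Q))"
  by (simp_all add: Tmap_apply algebra_simps)

definition orbit_gap_bound :: "real \<Rightarrow> nat \<Rightarrow> real \<Rightarrow> real \<Rightarrow> real \<times> real \<Rightarrow> real \<times> real \<Rightarrow> bool" where
  "orbit_gap_bound C k e d P Q \<longleftrightarrow>
     \<bar>fst P - fst Q\<bar> \<le> C * \<bar>d\<bar> \<and>
     \<bar>snd P - snd Q + real k * d\<bar> \<le> C * \<bar>e\<bar> * \<bar>d\<bar> \<and>
     \<bar>fst P - fst Q + real k * (real k + 1) / 2 * d\<bar> \<le> C * \<bar>e\<bar> * \<bar>d\<bar>"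

lemma orbit_gap_bound_Tmap:
  assumes L: "L-lipschitz_on UNIV f" and C: "C \<ge> 0" and e: "\<bar>e\<bar> \<le> 1"
    and gap: "orbit_gap_bound C k e (d1 - d2) P Q"
  shows "orbit_gap_bound (2 * C + L * C + real k + 1) (Suc k) e (d1 - d2)
           (Tmap \<mu> f e d1 P) (Tmap \<mu> f e d2 Q)"
proof -
  define d E D where "d = d1 - d2" and "E = \<bar>e\<bar>" and "D = \<bar>d1 - d2\<bar>"
  define dx dy where "dx = fst (Tmap \<mu> f e d1 P) - fst (Tmap \<mu> f e d2 Q)"
    and "dy = snd (Tmap \<mu> f e d1 P) - snd (Tmap \<mu> f e d2 Q)"
  have L0: "L \<ge> 0" and E: "0 \<le> E" "E \<le> 1" and D: "D \<ge> 0"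
    using lipschitz_on_nonneg[OF L] e by (auto simp: E_def D_def)
  have gx: "\<bar>fst P - fst Q\<bar> \<le> C * D"
    and gy: "\<bar>snd P - snd Q + real k * d\<bar> \<le> C * E * D"
    and gx': "\<bar>fst P - fst Q + real k * (real k + 1) / 2 * d\<bar> \<le> C * E * D"
    using gap by (simp_all add: orbit_gap_bound_def d_def E_def D_def)
  have "\<bar>f (fst P) - f (fst Q)\<bar> \<le> L * (C * D)"
    using lipschitz_on_normD[OF L, of "fst P" "fst Q"] gx L0
    by (auto intro: order_trans mult_left_mono)
  then have "E * \<bar>f (fst P) - f (fst Q)\<bar> \<le> E * (L * (C * D))"
    using E by (intro mult_left_mono) simp_all
  then have "\<bar>e * (f (fst P) - f (fst Q))\<bar> \<le> L * C * E * D"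
    by (simp add: E_def abs_mult mult_ac)
  then have new_gy: "\<bar>dy + real (Suc k) * d\<bar> \<le> C * E * D + L * C * E * D"
    unfolding dy_def d_def Tmap_gap(2)
    using gy abs_triangle_ineq4[of "snd P - snd Q + real k * d" "e * (f (fst P) - f (fst Q))"]
    by (simp add: d_def)
  have "C * E * D \<le> C * D" and "L * C * E * D \<le> L * C * D"
    using mult_left_mono[OF E(2), of "C * D"] mult_left_mono[OF E(2), of "L * C * D"] C D L0
    by (simp_all add: algebra_simps)
  moreover have "dx = (fst P - fst Q) + dy"
    unfolding dx_def dy_def by (rule Tmap_gap(1))
  moreover have "\<bar>real (Suc k) * d\<bar> = (real k + 1) * D"
    by (simp add: abs_mult D_def d_def)
  then have "\<bar>dy\<bar> \<le> C * E * D + L * C * E * D + (real k + 1) * D"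
    using new_gy abs_triangle_ineq4[of "dy + real (Suc k) * d" "real (Suc k) * d"] by simp
  ultimately have "\<bar>dx\<bar> \<le> C * D + (C * D + L * C * D) + (real k + 1) * D"
    using gx abs_triangle_ineq[of "fst P - fst Q" dy] by linarith
  then have new_gx: "\<bar>dx\<bar> \<le> (2 * C + L * C + real k + 1) * D"
    by (simp add: algebra_simps)
  have "dx + real (Suc k) * (real (Suc k) + 1) / 2 * d
      = (fst P - fst Q + real k * (real k + 1) / 2 * d) + (dy + real (Suc k) * d)"
    using \<open>dx = (fst P - fst Q) + dy\<close> by (simp add: field_simps)
  then have new_gx': "\<bar>dx + real (Suc k) * (real (Suc k) + 1) / 2 * d\<bar>
      \<le> C * E * D + (C * E * D + L * C * E * D)"
    using gx' new_gy by linarith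
  have "C * E * D + L * C * E * D \<le> (2 * C + L * C + real k + 1) * E * D"
    and "C * E * D + (C * E * D + L * C * E * D) \<le> (2 * C + L * C + real k + 1) * E * D"
    using C E D L0 by (simp_all add: algebra_simps)
  with new_gx new_gy new_gx' show ?thesis
    unfolding orbit_gap_bound_def dx_def dy_def d_def E_def D_def by linarith
qed

lemma Tmap_iter_orbit_gap:
  assumes L: "L-lipschitz_on UNIV f"
  obtains C where "C \<ge> 0"
    "\<And>e d1 d2 P. \<bar>e\<bar> \<le> 1 \<Longrightarrow>
       orbit_gap_bound C k e (d1 - d2) ((Tmap \<mu> f e d1 ^^ k) P) ((Tmap \<mu> f e d2 ^^ k) P)"
proof (induction k arbitrary: thesis)
  case 0
  show ?case by (rule 0[of 0]) (simp_all add: orbit_gap_bound_def)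
next
  case (Suc k)
  obtain C where C: "C \<ge> 0" and gap: "\<And>e d1 d2 P. \<bar>e\<bar> \<le> 1 \<Longrightarrow>
       orbit_gap_bound C k e (d1 - d2) ((Tmap \<mu> f e d1 ^^ k) P) ((Tmap \<mu> f e d2 ^^ k) P)"
    using Suc.IH by blast
  show ?case
  proof (rule Suc.prems)
    show "2 * C + L * C + real k + 1 \<ge> 0"
      using C lipschitz_on_nonneg[OF L] by simp
    show "orbit_gap_bound (2 * C + L * C + real k + 1) (Suc k) e (d1 - d2)
        ((Tmap \<mu> f e d1 ^^ Suc k) P) ((Tmap \<mu> f e d2 ^^ Suc k) P)" if "\<bar>e\<bar> \<le> 1" for e d1 d2 P
      using orbit_gap_bound_Tmap[OF L C that gap[OF that]] by simp
  qed
qed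

lemma power_Suc_smallo_power: "(\<lambda>e::real. e ^ Suc n) \<in> o[at 0](\<lambda>e. e ^ n)"
proof (rule smalloI_tendsto)
  have "eventually (\<lambda>e::real. e \<noteq> 0) (at 0)"
    by (simp add: eventually_at_filter)
  then show "eventually (\<lambda>e::real. e ^ n \<noteq> 0) (at 0)"
    by eventually_elim simp
  from this have "eventually (\<lambda>e::real. e ^ Suc n / e ^ n = e) (at 0)"
    by eventually_elim simp
  moreover have "((\<lambda>e::real. e) \<longlongrightarrow> 0) (at 0)"
    by (rule tendsto_ident_at)
  ultimately show "((\<lambda>e::real. e ^ Suc n / e ^ n) \<longlongrightarrow> 0) (at 0)"
    using tendsto_cong by force
qed

lemma powser_remainder_bigo:
  fixes c :: "nat \<Rightarrow> real"
  assumes \<rho>: "\<rho> > 0" and F: "\<And>e. \<bar>e\<bar> < \<rho> \<Longrightarrow> (\<lambda>n. c n * e ^ n) sums F e"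
  shows "(\<lambda>e. F e - (\<Sum>n<Suc r. c n * e ^ n)) \<in> O[at 0](\<lambda>e. e ^ Suc r)"
proof -
  define S where "S = (\<lambda>e. \<Sum>n<Suc r. c n * e ^ n)"
  define T where "T = (\<lambda>e. \<Sum>i. c (i + Suc r) * e ^ i)"
  have tail: "(\<lambda>i. c (i + Suc r) * e ^ i) sums ((F e - S e) / e ^ Suc r)"
    if e: "\<bar>e\<bar> < \<rho>" "e \<noteq> 0" for e
  proof -
    have "(\<lambda>i. c (i + Suc r) * e ^ (i + Suc r)) sums (F e - S e)"
      unfolding S_def using sums_split_initial_segment[OF F[OF e(1)], of "Suc r"] by simp
    from sums_divide[OF this, of "e ^ Suc r"] show ?thesis
      using e(2) by (simp add: power_add)
  qed
  have "summable (\<lambda>i. c (i + Suc r) * (\<rho> / 2) ^ i)"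
    using tail[of "\<rho> / 2"] \<rho> by (auto intro: sums_summable)
  then have "isCont T 0"
    unfolding T_def by (rule isCont_powser) (use \<rho> in auto)
  then have "eventually (\<lambda>e. dist (T e) (T 0) < 1) (at 0)"
    by (intro tendstoD) (simp_all add: isCont_def)
  moreover have "eventually (\<lambda>e::real. \<bar>e\<bar> < \<rho>) (at 0)"
    using \<rho> by (intro eventually_at_in_open'[of "{-\<rho><..<\<rho>}", THEN eventually_mono]) auto
  moreover have "eventually (\<lambda>e::real. e \<noteq> 0) (at 0)"
    by (simp add: eventually_at_filter)
  ultimately have "eventually (\<lambda>e. norm (F e - S e) \<le> (\<bar>T 0\<bar> + 1) * norm (e ^ Suc r)) (at 0)"
  proof eventually_elim
    case (elim e)
    have "F e - S e = e ^ Suc r * T e"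
      using sums_unique[OF tail[OF elim(2,3)]] elim(3) unfolding T_def by (simp add: field_simps)
    moreover have "\<bar>T e\<bar> \<le> \<bar>T 0\<bar> + 1"
      using elim(1) by (simp add: dist_real_def)
    ultimately show ?case
      by (simp add: abs_mult mult.commute mult_right_mono)
  qed
  then show ?thesis unfolding S_def by (rule bigoI)
qed

lemma Tmap_iter_parameter_expansion:
  fixes \<delta>1 \<delta>2 :: "real \<Rightarrow> real" and P :: "real \<Rightarrow> real \<times> real"
  assumes L: "L-lipschitz_on UNIV f"
    and \<delta>: "(\<lambda>e. \<delta>1 e - \<delta>2 e - a * e ^ r) \<in> O[at 0](\<lambda>e. e ^ Suc r)"
  shows "(\<lambda>e. fst ((Tmap \<mu> f e (\<delta>2 e) ^^ k) (P e)) - fst ((Tmap \<mu> f e (\<delta>1 e) ^^ k) (P e))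
            - real k * (real k + 1) / 2 * a * e ^ r) \<in> O[at 0](\<lambda>e. e ^ Suc r)"
    and "(\<lambda>e. snd ((Tmap \<mu> f e (\<delta>2 e) ^^ k) (P e)) - snd ((Tmap \<mu> f e (\<delta>1 e) ^^ k) (P e))
            - real k * a * e ^ r) \<in> O[at 0](\<lambda>e. e ^ Suc r)"
proof -
  obtain C where gap: "\<And>e d1 d2 P. \<bar>e\<bar> \<le> 1 \<Longrightarrow>
       orbit_gap_bound C k e (d1 - d2) ((Tmap \<mu> f e d1 ^^ k) P) ((Tmap \<mu> f e d2 ^^ k) P)"
    using Tmap_iter_orbit_gap[OF L, where k = k and \<mu> = \<mu>] by metis
  define d where "d e = \<delta>1 e - \<delta>2 e" for e
  define X where "X e = fst ((Tmap \<mu> f e (\<delta>1 e) ^^ k) (P e)) - fst ((Tmap \<mu> f e (\<delta>2 e) ^^ k) (P e))" for e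
  define Y where "Y e = snd ((Tmap \<mu> f e (\<delta>1 e) ^^ k) (P e)) - snd ((Tmap \<mu> f e (\<delta>2 e) ^^ k) (P e))" for e
  have "(\<lambda>e. d e - a * e ^ r) \<in> O[at 0](\<lambda>e. e ^ r)"
    using \<delta> landau_o.small_imp_big[OF power_Suc_smallo_power] unfolding d_def
    by (rule landau_o.big_trans)
  moreover have "(\<lambda>e. a * e ^ r) \<in> O[at 0](\<lambda>e. e ^ r)"
    by simp
  ultimately have "(\<lambda>e. (d e - a * e ^ r) + a * e ^ r) \<in> O[at 0](\<lambda>e. e ^ r)"
    by (rule sum_in_bigo(1))
  then have "(\<lambda>e. e * d e) \<in> O[at 0](\<lambda>e. e * e ^ r)"
    by (intro landau_o.big.mult_left) simp
  then have ed: "(\<lambda>e. e * d e) \<in> O[at 0](\<lambda>e. e ^ Suc r)"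
    by simp
  have "eventually (\<lambda>e::real. \<bar>e\<bar> \<le> 1) (at 0)"
    by (intro eventually_at_in_open'[of "{-1<..<1}", THEN eventually_mono]) auto
  then have ev: "eventually (\<lambda>e. orbit_gap_bound C k e (d e)
      ((Tmap \<mu> f e (\<delta>1 e) ^^ k) (P e)) ((Tmap \<mu> f e (\<delta>2 e) ^^ k) (P e))) (at 0)"
    by eventually_elim (simp add: d_def gap)
  from ev have "eventually (\<lambda>e. norm (X e + real k * (real k + 1) / 2 * d e) \<le> C * norm (e * d e)) (at 0)"
    by eventually_elim (simp add: orbit_gap_bound_def X_def abs_mult mult.assoc)
  then have gapX: "(\<lambda>e. X e + real k * (real k + 1) / 2 * d e) \<in> O[at 0](\<lambda>e. e ^ Suc r)"
    by (rule landau_o.big_trans[OF bigoI ed])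
  from ev have "eventually (\<lambda>e. norm (Y e + real k * d e) \<le> C * norm (e * d e)) (at 0)"
    by eventually_elim (simp add: orbit_gap_bound_def Y_def abs_mult mult.assoc)
  then have gapY: "(\<lambda>e. Y e + real k * d e) \<in> O[at 0](\<lambda>e. e ^ Suc r)"
    by (rule landau_o.big_trans[OF bigoI ed])
  have "(\<lambda>e. real k * (real k + 1) / 2 * (d e - a * e ^ r) - (X e + real k * (real k + 1) / 2 * d e))
          \<in> O[at 0](\<lambda>e. e ^ Suc r)"
    by (rule sum_in_bigo(2)[OF _ gapX]) (use \<delta> in \<open>simp add: d_def\<close>)
  moreover have "(\<lambda>e. real k * (real k + 1) / 2 * (d e - a * e ^ r) - (X e + real k * (real k + 1) / 2 * d e))
      = (\<lambda>e. fst ((Tmap \<mu> f e (\<delta>2 e) ^^ k) (P e)) - fst ((Tmap \<mu> f e (\<delta>1 e) ^^ k) (P e))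
            - real k * (real k + 1) / 2 * a * e ^ r)"
    by (simp add: fun_eq_iff X_def field_simps)
  ultimately show "(\<lambda>e. fst ((Tmap \<mu> f e (\<delta>2 e) ^^ k) (P e)) - fst ((Tmap \<mu> f e (\<delta>1 e) ^^ k) (P e))
            - real k * (real k + 1) / 2 * a * e ^ r) \<in> O[at 0](\<lambda>e. e ^ Suc r)"
    by simp
  have "(\<lambda>e. real k * (d e - a * e ^ r) - (Y e + real k * d e)) \<in> O[at 0](\<lambda>e. e ^ Suc r)"
    by (rule sum_in_bigo(2)[OF _ gapY]) (use \<delta> in \<open>simp add: d_def\<close>)
  moreover have "(\<lambda>e. real k * (d e - a * e ^ r) - (Y e + real k * d e))
      = (\<lambda>e. snd ((Tmap \<mu> f e (\<delta>2 e) ^^ k) (P e)) - snd ((Tmap \<mu> f e (\<delta>1 e) ^^ k) (P e))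
            - real k * a * e ^ r)"
    by (simp add: fun_eq_iff Y_def algebra_simps)
  ultimately show "(\<lambda>e. snd ((Tmap \<mu> f e (\<delta>2 e) ^^ k) (P e)) - snd ((Tmap \<mu> f e (\<delta>1 e) ^^ k) (P e))
            - real k * a * e ^ r) \<in> O[at 0](\<lambda>e. e ^ Suc r)"
    by simp
qed

lemma nR_nS_parameter_expansion:
  fixes \<delta>1 \<delta>2 y :: "real \<Rightarrow> real"
  assumes L: "L-lipschitz_on UNIV f"
    and \<delta>: "(\<lambda>e. \<delta>1 e - \<delta>2 e - a * e ^ r) \<in> O[at 0](\<lambda>e. e ^ Suc r)"
    and closed_orbit: "eventually (\<lambda>e. nR k \<mu> f x (y e) e (\<delta>1 e) = 0 \<and> nS k \<mu> f x (y e) e (\<delta>1 e) = 0) (at 0)"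
  shows "(\<lambda>e. nR k \<mu> f x (y e) e (\<delta>2 e) - real k * (real k + 1) / 2 * a * e ^ r) \<in> o[at 0](\<lambda>e. e ^ r)"
    and "(\<lambda>e. nS k \<mu> f x (y e) e (\<delta>2 e) - real k * a * e ^ r) \<in> o[at 0](\<lambda>e. e ^ r)"
proof -
  define orbit where "orbit \<delta> e = (Tmap \<mu> f e (\<delta> e) ^^ k) (x, y e)" for \<delta> e
  note expansion = Tmap_iter_parameter_expansion[OF L \<delta>, where k = k and \<mu> = \<mu> and P = "\<lambda>e. (x, y e)",
      folded orbit_def]
  from closed_orbit have gap: "eventually (\<lambda>e.
      nR k \<mu> f x (y e) e (\<delta>2 e) = fst (orbit \<delta>2 e) - fst (orbit \<delta>1 e) \<and>
      nS k \<mu> f x (y e) e (\<delta>2 e) = snd (orbit \<delta>2 e) - snd (orbit \<delta>1 e)) (at 0)"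
    by eventually_elim (auto simp: nR_def nS_def orbit_def)
  have "(\<lambda>e. fst (orbit \<delta>2 e) - fst (orbit \<delta>1 e) - real k * (real k + 1) / 2 * a * e ^ r)
          \<in> o[at 0](\<lambda>e. e ^ r)"
    using expansion(1) power_Suc_smallo_power by (rule landau_o.big_small_trans)
  then show "(\<lambda>e. nR k \<mu> f x (y e) e (\<delta>2 e) - real k * (real k + 1) / 2 * a * e ^ r) \<in> o[at 0](\<lambda>e. e ^ r)"
    by (rule landau_o.small.in_cong[THEN iffD1, rotated]) (use gap in \<open>elim eventually_mono; simp\<close>)
  have "(\<lambda>e. snd (orbit \<delta>2 e) - snd (orbit \<delta>1 e) - real k * a * e ^ r) \<in> o[at 0](\<lambda>e. e ^ r)"
    using expansion(2) power_Suc_smallo_power by (rule landau_o.big_small_trans)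
  then show "(\<lambda>e. nS k \<mu> f x (y e) e (\<delta>2 e) - real k * a * e ^ r) \<in> o[at 0](\<lambda>e. e ^ r)"
    by (rule landau_o.small.in_cong[THEN iffD1, rotated]) (use gap in \<open>elim eventually_mono; simp\<close>)
qed

theorem mainTheorem7:
  fixes p :: int and q :: nat and \<mu> :: real and f :: "real \<Rightarrow> real"
    and eb \<eta> :: real and \<Delta> Y :: "real \<Rightarrow> real \<Rightarrow> real"
    and Dn :: "nat \<Rightarrow> real \<Rightarrow> real" and r :: nat
  assumes q_pos: "q \<ge> 1"
    and mu_def: "\<mu> = 2 * pi * real_of_int p / real q"
    and f_periodic: "\<forall>x. f (x + 2 * pi) = f x"
    and f_analytic: "real_analytic_on f UNIV"
    and eb_pos: "eb > 0" and eta_pos: "\<eta> > 0"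
    and Delta_analytic: "real_analytic2_on \<Delta> (UNIV \<times> {-eb<..<eb})"
    and Y_analytic: "real_analytic2_on Y (UNIV \<times> {-eb<..<eb})"
    and Delta_zero: "\<forall>x. \<Delta> x 0 = 0"
    and Y_zero: "\<forall>x. Y x 0 = 0"
    and solution: "\<forall>x \<epsilon>. \<bar>\<epsilon>\<bar> < eb \<longrightarrow>
        \<bar>\<Delta> x \<epsilon>\<bar> < \<eta> \<and> \<bar>Y x \<epsilon>\<bar> < \<eta> \<and>
        nR q \<mu> f x (Y x \<epsilon>) \<epsilon> (\<Delta> x \<epsilon>) = 0 \<and> nS q \<mu> f x (Y x \<epsilon>) \<epsilon> (\<Delta> x \<epsilon>) = 0"
    and unique: "\<forall>x \<epsilon> \<delta> y. \<bar>\<epsilon>\<bar> < eb \<and> \<bar>\<delta>\<bar> < \<eta> \<and> \<bar>y\<bar> < \<eta> \<and>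
        nR q \<mu> f x y \<epsilon> \<delta> = 0 \<and> nS q \<mu> f x y \<epsilon> \<delta> = 0 \<longrightarrow>
        \<delta> = \<Delta> x \<epsilon> \<and> y = Y x \<epsilon>"
    and Delta_series: "\<forall>x. \<exists>\<rho>>0. \<forall>\<epsilon>. \<bar>\<epsilon>\<bar> < \<rho> \<longrightarrow> (\<lambda>n. Dn n x * \<epsilon> ^ n) sums \<Delta> x \<epsilon>"
    and Delta_depends: "\<exists>x1 x2 \<epsilon>. \<bar>\<epsilon>\<bar> < eb \<and> \<Delta> x1 \<epsilon> \<noteq> \<Delta> x2 \<epsilon>"
    and r_pos: "r \<ge> 1"
    and r_nonconst: "\<exists>x1 x2. Dn r x1 \<noteq> Dn r x2"
    and below_r_const: "\<forall>n<r. \<forall>x1 x2. Dn n x1 = Dn n x2"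
  defines "A \<equiv> (\<lambda>\<epsilon>. \<Sum>n<r. Dn n 0 * \<epsilon> ^ n)"
  shows "\<forall>x.
     (\<lambda>\<epsilon>. nR q \<mu> f x (Y x \<epsilon>) \<epsilon> (A \<epsilon>) - real (q * (q + 1)) / 2 * Dn r x * \<epsilon> ^ r)
        \<in> o[at 0](\<lambda>\<epsilon>. \<epsilon> ^ r) \<and>
     (\<lambda>\<epsilon>. nS q \<mu> f x (Y x \<epsilon>) \<epsilon> (A \<epsilon>) - real q * Dn r x * \<epsilon> ^ r)
        \<in> o[at 0](\<lambda>\<epsilon>. \<epsilon> ^ r)"
proof (intro allI)
  fix x :: real
  obtain L where L: "L-lipschitz_on UNIV f"
    using periodic_C1_lipschitz[OF real_analytic_on_UNIV_C1[OF f_analytic]] f_periodic pi_gt_zero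
    by (metis mult_pos_pos zero_less_numeral)
  obtain \<rho> where "\<rho> > 0" and "\<And>e. \<bar>e\<bar> < \<rho> \<Longrightarrow> (\<lambda>n. Dn n x * e ^ n) sums \<Delta> x e"
    using Delta_series by blast
  then have "(\<lambda>e. \<Delta> x e - (\<Sum>n<Suc r. Dn n x * e ^ n)) \<in> O[at 0](\<lambda>e. e ^ Suc r)"
    by (rule powser_remainder_bigo)
  moreover have "(\<Sum>n<r. Dn n x * e ^ n) = A e" for e
    unfolding A_def using below_r_const by (intro sum.cong) auto
  ultimately have \<delta>: "(\<lambda>e. \<Delta> x e - A e - Dn r x * e ^ r) \<in> O[at 0](\<lambda>e. e ^ Suc r)"
    by (simp add: algebra_simps)
  have "eventually (\<lambda>e::real. \<bar>e\<bar> < eb) (at 0)"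
    using eb_pos by (intro eventually_at_in_open'[of "{-eb<..<eb}", THEN eventually_mono]) auto
  then have "eventually (\<lambda>e. nR q \<mu> f x (Y x e) e (\<Delta> x e) = 0 \<and> nS q \<mu> f x (Y x e) e (\<Delta> x e) = 0) (at 0)"
    by eventually_elim (use solution in blast)
  from nR_nS_parameter_expansion[OF L \<delta> this]
  show "(\<lambda>\<epsilon>. nR q \<mu> f x (Y x \<epsilon>) \<epsilon> (A \<epsilon>) - real (q * (q + 1)) / 2 * Dn r x * \<epsilon> ^ r)
        \<in> o[at 0](\<lambda>\<epsilon>. \<epsilon> ^ r) \<and>
     (\<lambda>\<epsilon>. nS q \<mu> f x (Y x \<epsilon>) \<epsilon> (A \<epsilon>) - real q * Dn r x * \<epsilon> ^ r)
        \<in> o[at 0](\<lambda>\<epsilon>. \<epsilon> ^ r)"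
    by (simp add: algebra_simps)
qed

end
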